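(* For every metrizable space $X$, the set $AM(X)$ of bounded admissible metrics on $X$ is dense in the space $PM(X)$ of continuous bounded pseudometrics on $X$, where $PM(X)$ carries the topology of uniform convergence (induced by the sup-metric $D(f,g) = \sup_{(x,y) \in X^2}|f(x,y) - g(x,y)|$).
   Context: A pseudometric on $X$ is continuous if it is continuous as a function $X^2 \to \mathbb{R}$; a metric on $X$ is admissible if it induces the topology of $X$. Both $PM(X)$ and $AM(X)$ are regarded as subspaces of the space $C(X^2)$ of continuous bounded real-valued functions on $X^2$ with the uniform convergence topology. *)

theory Defs
  imports "HOL-Analysis.Analysis"
begin

definition pseudometric_on :: "'a set \<Rightarrow> ('a \<Rightarrow> 'a \<Rightarrow> real) \<Rightarrow> bool" where
  "pseudometric_on M d \<longleftrightarrow>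
     (\<forall>x\<in>M. d x x = 0) \<and>
     (\<forall>x\<in>M. \<forall>y\<in>M. 0 \<le> d x y) \<and>
     (\<forall>x\<in>M. \<forall>y\<in>M. d x y = d y x) \<and>
     (\<forall>x\<in>M. \<forall>y\<in>M. \<forall>z\<in>M. d x z \<le> d x y + d y z)"

definition bounded_on2 :: "'a set \<Rightarrow> ('a \<Rightarrow> 'a \<Rightarrow> real) \<Rightarrow> bool" where
  "bounded_on2 M d \<longleftrightarrow> (\<exists>B. \<forall>x\<in>M. \<forall>y\<in>M. \<bar>d x y\<bar> \<le> B)"

definition PM :: "'a topology \<Rightarrow> ('a \<Rightarrow> 'a \<Rightarrow> real) set" where
  "PM X = {d. pseudometric_on (topspace X) d \<and> bounded_on2 (topspace X) d \<and>
              continuous_map (prod_topology X X) euclideanreal (\<lambda>(x, y). d x y)}"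

definition AM :: "'a topology \<Rightarrow> ('a \<Rightarrow> 'a \<Rightarrow> real) set" where
  "AM X = {d. Metric_space (topspace X) d \<and> Metric_space.mtopology (topspace X) d = X \<and>
              bounded_on2 (topspace X) d}"

end

theory Submission
  imports Defs
begin

text \<open>Perturb d by an admissible metric c bounded by \<open>\<epsilon>\<close>, which exists by capping any
  compatible metric at \<open>\<epsilon>\<close>. Then \<open>\<rho> = d + c\<close> is a metric because c separates points, and it is
  admissible: \<open>c \<le> \<rho>\<close> makes every c-open set \<open>\<rho>\<close>-open, while the continuity of d and c makes
  every \<open>\<rho>\<close>-ball open in X. Finally \<open>\<bar>d - \<rho>\<bar> = c \<le> \<epsilon>\<close>.\<close>

lemma metrizable_space_obtain_metric_bounded_by:
  assumes "metrizable_space X" and "\<delta> > 0"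
  obtains c where "Metric_space (topspace X) c" and "Metric_space.mtopology (topspace X) c = X"
    and "\<And>x y. c x y \<le> \<delta>"
proof -
  obtain M m where m: "Metric_space M m" and X: "X = Metric_space.mtopology M m"
    using assms(1) unfolding metrizable_space_def by blast
  define m\<delta> where "m\<delta> = capped_metric \<delta> (metric (M, m))"
  have M: "mspace m\<delta> = M"
    using m by (simp add: m\<delta>_def Metric_space.mspace_metric)
  have "mtopology_of m\<delta> = X"
    unfolding m\<delta>_def mtopology_capped_metric using m X by (simp add: Metric_space.mtopology_of)
  then have "Metric_space.mtopology (topspace X) (mdist m\<delta>) = X"
    by (metis M mtopology_of_def topspace_mtopology_of)
  moreover have "Metric_space (topspace X) (mdist m\<delta>)"
    by (metis Metric_space_mspace_mdist \<open>mtopology_of m\<delta> = X\<close> topspace_mtopology_of)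
  moreover have "mdist m\<delta> x y \<le> \<delta>" for x y
    unfolding m\<delta>_def using assms(2) by (rule mdist_capped)
  ultimately show thesis using that by blast
qed

lemma (in Metric_space) continuous_map_mtopology_dist:
  assumes "x \<in> M"
  shows "continuous_map mtopology euclideanreal (d x)"
  using continuous_on_mdist[of x "metric (M, d)"] assms
  by (simp add: mdist_metric mspace_metric mtopology_of)

lemma continuous_map_PM_section:
  assumes "d \<in> PM X" and "x \<in> topspace X"
  shows "continuous_map X euclideanreal (d x)"
proof -
  have "continuous_map X (prod_topology X X) (\<lambda>y. (x, y))"
    using assms(2) by (intro continuous_map_pairedI) auto
  moreover have "continuous_map (prod_topology X X) euclideanreal (\<lambda>(x, y). d x y)"
    using assms(1) by (simp add: PM_def)
  ultimately show ?thesis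
    using continuous_map_compose by (fastforce simp: o_def)
qed

text \<open>The case distinction only makes the sum a metric in the sense of the locale, which
  asks for nonnegativity and symmetry off M as well.\<close>
lemma Metric_space_add_pseudometric:
  assumes c: "Metric_space M c" and d: "pseudometric_on M d"
  shows "Metric_space M (\<lambda>x y. if x \<in> M \<and> y \<in> M then d x y + c x y else 0)"
    (is "Metric_space M ?\<rho>")
proof -
  interpret c: Metric_space M c by (fact c)
  show ?thesis
  proof
    fix x y
    show "0 \<le> ?\<rho> x y"
      using d by (simp add: pseudometric_on_def)
    show "?\<rho> x y = ?\<rho> y x"
      using d c.commute by (auto simp: pseudometric_on_def)
    assume "x \<in> M" "y \<in> M"
    with d show "?\<rho> x y = 0 \<longleftrightarrow> x = y"
      by (auto simp: pseudometric_on_def add_nonneg_eq_0_iff)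
  next
    fix x y z
    assume xyz: "x \<in> M" "y \<in> M" "z \<in> M"
    then have "d x z \<le> d x y + d y z"
      using d by (simp add: pseudometric_on_def)
    with xyz c.triangle[of x y z] show "?\<rho> x z \<le> ?\<rho> x y + ?\<rho> y z"
      by simp
  qed
qed

lemma mtopology_eq_of_dominating_continuous_metric:
  assumes c: "Metric_space M c" and X: "Metric_space.mtopology M c = X"
    and \<rho>: "Metric_space M \<rho>"
    and le: "\<And>x y. x \<in> M \<Longrightarrow> y \<in> M \<Longrightarrow> c x y \<le> \<rho> x y"
    and cont: "\<And>x. x \<in> M \<Longrightarrow> continuous_map X euclideanreal (\<rho> x)"
  shows "Metric_space.mtopology M \<rho> = X"
proof -
  interpret c: Metric_space M c by (fact c)
  interpret \<rho>: Metric_space M \<rho> by (fact \<rho>)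
  have M: "topspace X = M"
    using X by auto
  have "continuous_map \<rho>.mtopology c.mtopology id"
    unfolding c.continuous_map_to_metric
  proof (intro ballI allI impI)
    fix x and r :: real
    assume "x \<in> topspace \<rho>.mtopology" "r > 0"
    then show "\<exists>U. openin \<rho>.mtopology U \<and> x \<in> U \<and> (\<forall>y\<in>U. id y \<in> c.mball (id x) r)"
      using le by (intro exI[of _ "\<rho>.mball x r"]) fastforce
  qed
  moreover have "continuous_map X \<rho>.mtopology id"
    unfolding \<rho>.continuous_map_to_metric
  proof (intro ballI allI impI)
    fix x and r :: real
    assume x: "x \<in> topspace X" and "r > 0"
    have "openin X {y \<in> topspace X. \<rho> x y \<in> {..<r}}"
      using x M by (intro openin_continuous_map_preimage[OF cont]) auto
    moreover have "\<rho>.mball x r = {y \<in> topspace X. \<rho> x y \<in> {..<r}}"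
      using x M by (auto simp: \<rho>.mball_def)
    ultimately have "openin X (\<rho>.mball x r)"
      by simp
    then show "\<exists>U. openin X U \<and> x \<in> U \<and> (\<forall>y\<in>U. id y \<in> \<rho>.mball (id x) r)"
      using x M \<open>r > 0\<close> by (intro exI[of _ "\<rho>.mball x r"]) auto
  qed
  ultimately show ?thesis
    using topology_finer_continuous_id[of X \<rho>.mtopology] topology_finer_continuous_id[of \<rho>.mtopology X]
      X M by (auto simp: topology_eq)
qed

lemma add_PM_in_AM:
  assumes c: "Metric_space (topspace X) c" and X: "Metric_space.mtopology (topspace X) c = X"
    and "bounded_on2 (topspace X) c" and d: "d \<in> PM X"
  shows "(\<lambda>x y. if x \<in> topspace X \<and> y \<in> topspace X then d x y + c x y else 0) \<in> AM X"
    (is "?\<rho> \<in> AM X")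
proof -
  have d_pm: "pseudometric_on (topspace X) d"
    using d by (simp add: PM_def)
  have \<rho>: "Metric_space (topspace X) ?\<rho>"
    using c d_pm by (rule Metric_space_add_pseudometric)
  have "continuous_map X euclideanreal (?\<rho> x)" if x: "x \<in> topspace X" for x
  proof -
    have "continuous_map X euclideanreal (\<lambda>y. d x y + c x y)"
      using continuous_map_PM_section[OF d x] Metric_space.continuous_map_mtopology_dist[OF c x] X
      by (intro continuous_intros) auto
    then show ?thesis
      by (rule continuous_map_eq) (use x in auto)
  qed
  moreover have "c x y \<le> ?\<rho> x y" if "x \<in> topspace X" "y \<in> topspace X" for x y
    using d_pm that by (simp add: pseudometric_on_def)
  ultimately have "Metric_space.mtopology (topspace X) ?\<rho> = X"
    using mtopology_eq_of_dominating_continuous_metric[OF c X \<rho>] by blast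
  moreover have "bounded_on2 (topspace X) ?\<rho>"
  proof -
    obtain A where "\<forall>x\<in>topspace X. \<forall>y\<in>topspace X. \<bar>d x y\<bar> \<le> A"
      using d by (auto simp: PM_def bounded_on2_def)
    moreover obtain B where "\<forall>x\<in>topspace X. \<forall>y\<in>topspace X. \<bar>c x y\<bar> \<le> B"
      using \<open>bounded_on2 (topspace X) c\<close> by (auto simp: bounded_on2_def)
    ultimately show ?thesis
      unfolding bounded_on2_def by (intro exI[of _ "A + B"]) force
  qed
  ultimately show ?thesis
    using \<rho> by (simp add: AM_def)
qed

theorem proposition3:
  fixes X :: "'a topology"
  assumes "metrizable_space X"
  shows "\<forall>d\<in>PM X. \<forall>\<epsilon>>0. \<exists>\<rho>\<in>AM X.
           \<forall>x\<in>topspace X. \<forall>y\<in>topspace X. \<bar>d x y - \<rho> x y\<bar> \<le> \<epsilon>"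
proof (intro ballI allI impI)
  fix d and \<epsilon> :: real
  assume d: "d \<in> PM X" and "\<epsilon> > 0"
  obtain c where c: "Metric_space (topspace X) c" and X: "Metric_space.mtopology (topspace X) c = X"
    and c_le: "\<And>x y. c x y \<le> \<epsilon>"
    using metrizable_space_obtain_metric_bounded_by[OF assms \<open>\<epsilon> > 0\<close>] by blast
  have c_bounded: "bounded_on2 (topspace X) c"
    unfolding bounded_on2_def using c_le Metric_space.nonneg[OF c] by (intro exI[of _ \<epsilon>]) simp
  define \<rho> where "\<rho> = (\<lambda>x y. if x \<in> topspace X \<and> y \<in> topspace X then d x y + c x y else 0)"
  have "\<rho> \<in> AM X"
    unfolding \<rho>_def using c X c_bounded d by (rule add_PM_in_AM)
  moreover have "\<forall>x\<in>topspace X. \<forall>y\<in>topspace X. \<bar>d x y - \<rho> x y\<bar> \<le> \<epsilon>"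
    using c_le Metric_space.nonneg[OF c] by (simp add: \<rho>_def)
  ultimately show "\<exists>\<rho>\<in>AM X. \<forall>x\<in>topspace X. \<forall>y\<in>topspace X. \<bar>d x y - \<rho> x y\<bar> \<le> \<epsilon>"
    by blast
qed

end
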